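(* Let $\theta(q,x):=\sum_{j=0}^{\infty}q^{j(j+1)/2}x^j$ and $w:=3/\sqrt{2}$. For all $(q,t)\in[0.6,0.75]\times[0,1]$, one has $\theta(q,-t+wi)\neq 0$. *)

theory Defs
  imports "HOL-Analysis.Analysis"
begin

definition ptheta :: "real \<Rightarrow> complex \<Rightarrow> complex" where
  "ptheta q x = (\<Sum>j. complex_of_real (q ^ (j * (j + 1) div 2)) * x ^ j)"

end

theory Submission
  imports Defs
begin

text \<open>Write \<open>x = -t + w\<i>\<close> with \<open>w\<^sup>2 = 9/2\<close>. Since \<open>Im (x\<^sup>j) / w\<close> depends on \<open>w\<close> only
  through \<open>w\<^sup>2\<close>, it is a polynomial in \<open>t\<close>; expanding it in the Bernstein basis of degree 6 on
  \<open>[0, 1]\<close> gives \<open>Im (\<Sum>j<8. q ^ (j(j+1)/2) * x ^ j) = w * (\<Sum>k\<le>6. c k q * Bernstein 6 k t)\<close>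
  with explicit polynomials \<open>c k\<close> in \<open>q\<close>. Bounding the positive monomials of \<open>c k\<close> from below
  at the left end and the negative ones at the right end of each cell of a subdivision of
  \<open>[3/5, 3/4]\<close> shows \<open>c k q > 1/20\<close>, so the imaginary part of this partial sum is at least
  \<open>w/20 \<ge> 1/10\<close>. The remaining terms are dominated by a geometric series of sum at most
  \<open>3/80\<close>, hence \<open>Im \<theta>(q, x) > 0\<close>.\<close>

lemma triangular_add_ge:
  fixes m n :: nat
  shows "m * (m + 1) div 2 + (m + 1) * n \<le> (n + m) * (n + m + 1) div 2"
proof -
  have "n \<le> n * n" by (cases n) simp_all
  moreover have "2 * (m * (m + 1) div 2) = m * (m + 1)" by simp
  ultimately have "2 * (m * (m + 1) div 2 + (m + 1) * n) \<le> (n + m) * (n + m + 1)"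
    by (simp add: algebra_simps)
  from div_le_mono[OF this, of 2] show ?thesis by simp
qed

lemma ptheta_tail_bound:
  fixes q :: real and x :: complex
  assumes "0 \<le> q" "q \<le> 1" "q ^ (m + 1) * norm x < 1"
  shows "norm (ptheta q x - (\<Sum>j<m. complex_of_real (q ^ (j * (j + 1) div 2)) * x ^ j))
    \<le> q ^ (m * (m + 1) div 2) * norm x ^ m / (1 - q ^ (m + 1) * norm x)"
proof -
  define r where "r = q ^ (m + 1) * norm x"
  define c where "c = q ^ (m * (m + 1) div 2) * norm x ^ m"
  define f where "f j = complex_of_real (q ^ (j * (j + 1) div 2)) * x ^ j" for j
  have r: "0 \<le> r" "r < 1" using assms by (simp_all add: r_def)
  have f_le: "norm (f (n + m)) \<le> c * r ^ n" for n
  proof -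
    have "norm (f (n + m)) = q ^ ((n + m) * (n + m + 1) div 2) * norm x ^ (n + m)"
      by (simp add: f_def norm_mult norm_power assms(1))
    also have "\<dots> \<le> q ^ (m * (m + 1) div 2 + (m + 1) * n) * norm x ^ (n + m)"
      by (intro mult_right_mono power_decreasing triangular_add_ge) (simp_all add: assms)
    also have "\<dots> = c * r ^ n"
      by (simp add: c_def r_def power_add power_mult_distrib power_mult mult_ac)
    finally show ?thesis .
  qed
  have geometric: "summable (\<lambda>n. c * r ^ n)"
    using r by (intro summable_mult summable_geometric) simp
  have "summable (\<lambda>n. f (n + m))"
    using summable_comparison_test'[OF geometric f_le] .
  then have "suminf f = (\<Sum>n. f (n + m)) + (\<Sum>j<m. f j)"
    by (simp add: suminf_split_initial_segment)
  moreover have "ptheta q x = suminf f"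
    unfolding ptheta_def f_def ..
  ultimately have "ptheta q x - (\<Sum>j<m. f j) = (\<Sum>n. f (n + m))"
    by simp
  then have "norm (ptheta q x - (\<Sum>j<m. f j)) \<le> (\<Sum>n. c * r ^ n)"
    using norm_suminf_le[OF f_le geometric] by simp
  also have "\<dots> = c / (1 - r)"
    using r by (simp add: suminf_mult suminf_geometric)
  finally show ?thesis by (simp add: f_def c_def r_def)
qed

fun power_parts :: "real \<Rightarrow> real \<Rightarrow> nat \<Rightarrow> real \<times> real" where
  "power_parts a s 0 = (1, 0)"
| "power_parts a s (Suc n) = (case power_parts a s n of (p, r) \<Rightarrow> (a * p - s * r, p + a * r))"

lemma Complex_power_parts:
  assumes "b\<^sup>2 = s"
  shows "Complex a b ^ n = Complex (fst (power_parts a s n)) (b * snd (power_parts a s n))"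
proof (induction n)
  case 0
  show ?case by (simp add: one_complex.ctr)
next
  case (Suc n)
  then show ?case
    using assms by (simp add: complex_eq_iff split: prod.split) (simp add: power2_eq_square algebra_simps)
qed

definition monomials_lower_bound ::
    "(nat \<Rightarrow> real) \<Rightarrow> (nat \<Rightarrow> nat) \<Rightarrow> nat set \<Rightarrow> real \<Rightarrow> real \<Rightarrow> real" where
  "monomials_lower_bound c e J a b =
     (\<Sum>j\<in>J. if 0 \<le> c j then c j * a ^ e j else c j * b ^ e j)"

lemma monomials_lower_bound_le:
  assumes "0 \<le> a" "a \<le> q" "q \<le> b"
  shows "monomials_lower_bound c e J a b \<le> (\<Sum>j\<in>J. c j * q ^ e j)"
  unfolding monomials_lower_bound_def
proof (rule sum_mono)
  fix j
  have "a ^ e j \<le> q ^ e j" "q ^ e j \<le> b ^ e j"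
    using assms by (auto intro: power_mono)
  then show "(if 0 \<le> c j then c j * a ^ e j else c j * b ^ e j) \<le> c j * q ^ e j"
    by (auto intro: mult_left_mono mult_left_mono_neg)
qed

lemma successively_cover:
  fixes q :: "'a::linorder"
  assumes "successively P xs" "2 \<le> length xs" "hd xs \<le> q" "q \<le> last xs"
  shows "\<exists>a b. P a b \<and> a \<le> q \<and> q \<le> b"
  using assms
proof (induction xs rule: induct_list012)
  case (3 a b xs)
  show ?case
  proof (cases "q \<le> b")
    case True
    then show ?thesis using "3.prems" by auto
  next
    case False
    then have "xs \<noteq> []" using "3.prems"(4) by auto
    then have "successively P (b # xs)" "2 \<le> length (b # xs)" "hd (b # xs) \<le> q"
      "q \<le> last (b # xs)"
      using "3.prems" False by (auto simp: Suc_le_eq)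
    then show ?thesis by (rule "3.IH"(2))
  qed
qed simp_all

lemma Bernstein_combination_ge:
  assumes "\<And>k. k \<le> n \<Longrightarrow> c \<le> f k" "0 \<le> t" "t \<le> 1"
  shows "c \<le> (\<Sum>k\<le>n. f k * Bernstein n k t)"
proof -
  have "c = (\<Sum>k\<le>n. c * Bernstein n k t)"
    by (simp flip: sum_distrib_left)
  also have "\<dots> \<le> (\<Sum>k\<le>n. f k * Bernstein n k t)"
    using assms by (intro sum_mono mult_right_mono) (auto intro: Bernstein_nonneg)
  finally show ?thesis .
qed

definition im_power_rows :: "real list list" where
  "im_power_rows =
    [[0, 0, 0, 0, 0, 0, 0],
     [1, 1, 1, 1, 1, 1, 1],
     [0, -1/3, -2/3, -1, -4/3, -5/3, -2],
     [-9/2, -9/2, -43/10, -39/10, -33/10, -5/2, -3/2],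
     [0, 3, 6, 44/5, 56/5, 13, 14],
     [81/4, 81/4, 69/4, 45/4, 31/12, -97/12, -79/4],
     [0, -81/4, -81/2, -225/4, -63, -229/4, -75/2],
     [-729/8, -729/8, -2511/40, -243/40, 2739/40, 1119/8, 1469/8]]"

lemma power_parts_Bernstein:
  assumes "j < 8"
  shows "snd (power_parts (- t) (9/2) j) = (\<Sum>k\<le>6. im_power_rows ! j ! k * Bernstein 6 k t)"
proof -
  have j: "j \<in> {0, 1, 2, 3, 4, 5, 6, 7}" using assms by auto
  have atMost_6: "{..6::nat} = {0, 1, 2, 3, 4, 5, 6}" by auto
  have choose_6: "(6::nat) choose 2 = 15" "(6::nat) choose 3 = 20" "(6::nat) choose 4 = 15"
    "(6::nat) choose 5 = 6" by (simp_all add: eval_nat_numeral)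
  show ?thesis
    using j
    apply (simp add: atMost_6 choose_6 im_power_rows_def Bernstein_def)
    by (elim disjE; simp add: numeral_eq_Suc; simp add: field_simps)
qed

definition im_bernstein_coeff :: "nat \<Rightarrow> real \<Rightarrow> real" where
  "im_bernstein_coeff k q = (\<Sum>j<8. im_power_rows ! j ! k * q ^ (j * (j + 1) div 2))"

lemma Im_ptheta_partial_sum:
  assumes "w\<^sup>2 = 9/2"
  shows "Im (\<Sum>j<8. complex_of_real (q ^ (j * (j + 1) div 2)) * Complex (- t) w ^ j)
    = w * (\<Sum>k\<le>6. im_bernstein_coeff k q * Bernstein 6 k t)"
proof -
  have "Im (\<Sum>j<8. complex_of_real (q ^ (j * (j + 1) div 2)) * Complex (- t) w ^ j)
      = (\<Sum>j<8. q ^ (j * (j + 1) div 2) * (w * snd (power_parts (- t) (9/2) j)))"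
    by (simp add: Complex_power_parts[OF assms])
  also have "\<dots> = (\<Sum>j<8. q ^ (j * (j + 1) div 2) *
      (w * (\<Sum>k\<le>6. im_power_rows ! j ! k * Bernstein 6 k t)))"
    by (intro sum.cong refl) (simp add: power_parts_Bernstein)
  also have "\<dots> = w * (\<Sum>k\<le>6. im_bernstein_coeff k q * Bernstein 6 k t)"
    unfolding im_bernstein_coeff_def
    by (simp add: sum_distrib_left sum_distrib_right mult_ac sum.swap[of _ "{..<8}"])
  finally show ?thesis .
qed

definition im_cells :: "real list list" where
  "im_cells =
    [[3/5, 141/200, 37/50, 3/4],
     [3/5, 273/400, 143/200, 147/200, 3/4],
     [3/5, 267/400, 7/10, 18/25, 147/200, 149/200, 3/4],
     [3/5, 263/400, 11/16, 283/400, 289/400, 293/400, 297/400, 3/4],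
     [3/5, 259/400, 27/40, 139/200, 71/100, 289/400, 293/400, 37/50, 299/400, 3/4],
     [3/5, 16/25, 133/200, 273/400, 279/400, 71/100, 18/25, 291/400, 147/200, 297/400,
      299/400, 3/4],
     [3/5, 253/400, 131/200, 269/400, 137/200, 139/200, 141/200, 57/80, 18/25, 291/400,
      293/400, 59/80, 297/400, 299/400, 3/4]]"

lemma im_cells_certificate:
  assumes "k \<le> 6"
  shows "2 \<le> length (im_cells ! k) \<and> hd (im_cells ! k) = 3/5 \<and> last (im_cells ! k) = 3/4 \<and>
    successively (\<lambda>a b. 0 \<le> a \<and> 1/20 < monomials_lower_bound (\<lambda>j. im_power_rows ! j ! k)
      (\<lambda>j. j * (j + 1) div 2) {..<8} a b) (im_cells ! k)"
proof -
  have k: "k \<in> {0, 1, 2, 3, 4, 5, 6}" using assms by auto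
  have lessThan_8: "{..<8::nat} = {0, 1, 2, 3, 4, 5, 6, 7}" by auto
  show ?thesis
    using k by (auto simp: lessThan_8 im_cells_def im_power_rows_def monomials_lower_bound_def
      power_divide)
qed

lemma im_bernstein_coeff_gt:
  assumes "k \<le> 6" "3/5 \<le> q" "q \<le> 3/4"
  shows "1/20 < im_bernstein_coeff k q"
proof -
  let ?lower = "monomials_lower_bound (\<lambda>j. im_power_rows ! j ! k) (\<lambda>j. j * (j + 1) div 2) {..<8}"
  let ?cell_ok = "\<lambda>a b. 0 \<le> a \<and> 1/20 < ?lower a b"
  have "successively ?cell_ok (im_cells ! k)" "2 \<le> length (im_cells ! k)"
    "hd (im_cells ! k) \<le> q" "q \<le> last (im_cells ! k)"
    using im_cells_certificate[OF assms(1)] assms(2,3) by simp_all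
  then obtain a b where cell: "0 \<le> a" "a \<le> q" "q \<le> b" and "1/20 < ?lower a b"
    by (blast dest: successively_cover)
  moreover have "?lower a b \<le> im_bernstein_coeff k q"
    unfolding im_bernstein_coeff_def using cell by (rule monomials_lower_bound_le)
  ultimately show ?thesis by linarith
qed

lemma ptheta_tail_small:
  fixes q :: real and x :: complex
  assumes "3/5 \<le> q" "q \<le> 3/4" "norm x ^ 2 \<le> 11/2"
  shows "norm (ptheta q x - (\<Sum>j<8. complex_of_real (q ^ (j * (j + 1) div 2)) * x ^ j)) \<le> 3/80"
proof -
  have q: "0 \<le> q" "q \<le> 1" using assms(1,2) by simp_all
  have ratio: "q ^ 9 * norm x \<le> 1/5"
  proof (rule power2_le_imp_le)
    have "(q ^ 9 * norm x)\<^sup>2 = q ^ 18 * (norm x)\<^sup>2"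
      by (simp add: power_mult_distrib flip: power_mult)
    also have "\<dots> \<le> (3/4) ^ 18 * (11/2)"
      using assms q by (intro mult_mono power_mono) simp_all
    also have "\<dots> \<le> (1/5)\<^sup>2" by (simp add: power_divide)
    finally show "(q ^ 9 * norm x)\<^sup>2 \<le> (1/5)\<^sup>2" .
  qed simp
  have tail_head: "q ^ 36 * norm x ^ 8 \<le> 3/100"
  proof -
    have "q ^ 36 * norm x ^ 8 = q ^ 36 * ((norm x)\<^sup>2) ^ 4"
      by (simp flip: power_mult)
    also have "\<dots> \<le> (3/4) ^ 36 * (11/2) ^ 4"
      using assms q by (intro mult_mono power_mono) simp_all
    also have "\<dots> \<le> 3/100" by (simp add: power_divide)
    finally show ?thesis .
  qed
  have "norm (ptheta q x - (\<Sum>j<8. complex_of_real (q ^ (j * (j + 1) div 2)) * x ^ j))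
      \<le> q ^ 36 * norm x ^ 8 / (1 - q ^ 9 * norm x)"
    using ptheta_tail_bound[of q 8 x] q ratio by simp
  also have "\<dots> \<le> (3/100) / (1 - 1/5)"
    using tail_head ratio by (intro frac_le) simp_all
  finally show ?thesis by simp
qed

theorem lemma10:
  fixes q t :: real
  assumes "0.6 \<le> q" and "q \<le> 0.75" and "0 \<le> t" and "t \<le> 1"
  shows "ptheta q (Complex (- t) (3 / sqrt 2)) \<noteq> 0"
proof -
  define w where "w = 3 / sqrt 2"
  define x where "x = Complex (- t) w"
  define partial where "partial = (\<Sum>j<8. complex_of_real (q ^ (j * (j + 1) div 2)) * x ^ j)"
  have q: "3/5 \<le> q" "q \<le> 3/4" using assms(1,2) by simp_all
  have w2: "w\<^sup>2 = 9/2" by (simp add: w_def power_divide)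
  have "sqrt 2 \<le> 3/2" by (rule real_le_lsqrt) (simp_all add: power2_eq_square)
  then have w_ge: "2 \<le> w" by (simp add: w_def le_divide_eq)
  have "(norm x)\<^sup>2 \<le> 11/2"
    using assms(3,4) by (simp add: x_def cmod_power2 w2 power_le_one)
  then have tail: "norm (ptheta q x - partial) \<le> 3/80"
    unfolding partial_def using ptheta_tail_small q by blast
  have Bernstein_part: "1/20 \<le> (\<Sum>k\<le>6. im_bernstein_coeff k q * Bernstein 6 k t)"
    using q assms(3,4) by (intro Bernstein_combination_ge less_imp_le[OF im_bernstein_coeff_gt])
  have "2 * (1/20) \<le> w * (\<Sum>k\<le>6. im_bernstein_coeff k q * Bernstein 6 k t)"
    by (rule mult_mono) (use w_ge Bernstein_part in auto)
  then have "1/10 \<le> Im partial"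
    unfolding partial_def x_def Im_ptheta_partial_sum[OF w2] by simp
  moreover have "Im partial - Im (ptheta q x) \<le> 3/80"
    using abs_Im_le_cmod[of "ptheta q x - partial"] tail by simp
  ultimately have "0 < Im (ptheta q x)" by linarith
  then show ?thesis by (auto simp: x_def w_def)
qed

end
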